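(* Let $P$ be an increasing tableau of normal shape with $C$ columns, and for $1\le i\le j$ let $P_{i,j}=P_i\triangleleft(P_{i+1}\triangleleft(\cdots\triangleleft P_j))$. Suppose an anti-rectification of $P$ (with any choices of placements of $\bullet$'s) produces an anti-normal increasing tableau $P^{\searrow}$ whose rightmost column is column $C$. Then the set of entries in column $1$ of $P^{\searrow}$ equals $P_{1,C}$.
   Context: Tableaux are drawn in English convention; $T_j$ is the set of (integer) entries of column $j$. For finite $S,T\subseteq\mathbb{Z}_{>0}$, $T\triangleleft S$ is obtained by going through $S$ from largest to smallest, each $s$ picking the largest not-yet-picked element of $T$ less than $s$ (if any), and taking the set of picked elements. A skew diagram $\lambda/\mu$ is the set difference of two nested Young diagrams; it is normal if $\mu=\emptyset$ and anti-normal if it is right- and bottom-justified (i.e. $\lambda$ is a rectangle). An increasing skew tableau is a filling of a skew diagram with positive integers strictly increasing along rows and columns. A dotted skew tableau is a filling of a skew diagram with positive integers and the symbol $\bullet$; for $m\ge0$, $\mathrm{sInc}_{m<\bullet}$ is the set of dotted skew tableaux whose rows and columns are strictly increasing for the order $1<\cdots<m<\bullet<m+1<\cdots$. For $m\ge1$, the reverse K-jeu-de-taquin move $\mathrm{sInc}_{m<\bullet}\to\mathrm{sInc}_{m-1<\bullet}$ simultaneously replaces every $\bullet$ that is edge-adjacent to an $m$ by $m$ and every $m$ that is edge-adjacent to a $\bullet$ by $\bullet$ (shape preserved). One anti-rectification step on an increasing skew tableau with entries at most $m$: add some new cells filled with $\bullet$ so that the result is a dotted skew tableau in $\mathrm{sInc}_{m<\bullet}$,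 apply the reverse K-jeu-de-taquin moves for $m,m-1,\dots,1$ to get an element of $\mathrm{sInc}_{0<\bullet}$, then delete all $\bullet$ cells. Anti-rectification repeats such steps (with arbitrary choices) until the shape is anti-normal. *)

theory Defs
  imports Main
begin

text \<open>Cells are pairs (row, column) of positive naturals (English convention,
rows numbered top to bottom, columns left to right, starting at 1).\<close>

type_synonym cell = "nat \<times> nat"

definition young :: "cell set \<Rightarrow> bool" where
  "young D \<longleftrightarrow> finite D \<and> (\<forall>(i,j)\<in>D. 1 \<le> i \<and> 1 \<le> j) \<and>
     (\<forall>i j i' j'. (i,j) \<in> D \<longrightarrow> 1 \<le> i' \<longrightarrow> i' \<le> i \<longrightarrow> 1 \<le> j' \<longrightarrow> j' \<le> j \<longrightarrow> (i',j') \<in> D)"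

definition skew :: "cell set \<Rightarrow> bool" where
  "skew S \<longleftrightarrow> (\<exists>L M. young L \<and> young M \<and> M \<subseteq> L \<and> S = L - M)"

definition rect :: "nat \<Rightarrow> nat \<Rightarrow> cell set" where
  "rect a b = {1..a} \<times> {1..b}"

definition antinormal :: "cell set \<Rightarrow> bool" where
  "antinormal S \<longleftrightarrow> (\<exists>a b M. young M \<and> M \<subseteq> rect a b \<and> S = rect a b - M)"

definition inc_tab :: "(cell \<Rightarrow> nat option) \<Rightarrow> bool" where
  "inc_tab T \<longleftrightarrow> skew (dom T) \<and> (\<forall>c v. T c = Some v \<longrightarrow> 1 \<le> v) \<and>
     (\<forall>i j j' a b. T (i,j) = Some a \<longrightarrow> T (i,j') = Some b \<longrightarrow> j < j' \<longrightarrow> a < b) \<and>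
     (\<forall>i i' j a b. T (i,j) = Some a \<longrightarrow> T (i',j) = Some b \<longrightarrow> i < i' \<longrightarrow> a < b)"

datatype dentry = Num nat | Dot

text \<open>The order 1 < ... < m < Dot < m+1 < ...\<close>
fun dlt :: "nat \<Rightarrow> dentry \<Rightarrow> dentry \<Rightarrow> bool" where
  "dlt m (Num a) (Num b) = (a < b)"
| "dlt m (Num a) Dot = (a \<le> m)"
| "dlt m Dot (Num b) = (m < b)"
| "dlt m Dot Dot = False"

definition sInc :: "nat \<Rightarrow> (cell \<Rightarrow> dentry option) \<Rightarrow> bool" where
  "sInc m D \<longleftrightarrow> skew (dom D) \<and> (\<forall>c v. D c = Some (Num v) \<longrightarrow> 1 \<le> v) \<and>
     (\<forall>i j j' a b. D (i,j) = Some a \<longrightarrow> D (i,j') = Some b \<longrightarrow> j < j' \<longrightarrow> dlt m a b) \<and>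
     (\<forall>i i' j a b. D (i,j) = Some a \<longrightarrow> D (i',j) = Some b \<longrightarrow> i < i' \<longrightarrow> dlt m a b)"

definition adj :: "cell \<Rightarrow> cell \<Rightarrow> bool" where
  "adj c c' \<longleftrightarrow> (fst c = fst c' \<and> (snd c' = snd c + 1 \<or> snd c = snd c' + 1)) \<or>
                (snd c = snd c' \<and> (fst c' = fst c + 1 \<or> fst c = fst c' + 1))"

text \<open>Reverse K-jeu-de-taquin move sInc_{m<Dot} -> sInc_{m-1<Dot}.\<close>
definition kmove :: "nat \<Rightarrow> (cell \<Rightarrow> dentry option) \<Rightarrow> (cell \<Rightarrow> dentry option)" where
  "kmove m D = (\<lambda>c. case D c of
      None \<Rightarrow> None
    | Some Dot \<Rightarrow> (if \<exists>c'. adj c c' \<and> D c' = Some (Num m) then Some (Num m) else Some Dot)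
    | Some (Num k) \<Rightarrow> (if k = m \<and> (\<exists>c'. adj c c' \<and> D c' = Some Dot) then Some Dot else Some (Num k)))"

fun rev_moves :: "nat \<Rightarrow> (cell \<Rightarrow> dentry option) \<Rightarrow> (cell \<Rightarrow> dentry option)" where
  "rev_moves 0 D = D"
| "rev_moves (Suc k) D = rev_moves k (kmove (Suc k) D)"

definition undot :: "(cell \<Rightarrow> dentry option) \<Rightarrow> (cell \<Rightarrow> nat option)" where
  "undot D = (\<lambda>c. case D c of Some (Num k) \<Rightarrow> Some k | _ \<Rightarrow> None)"

definition add_dots :: "(cell \<Rightarrow> nat option) \<Rightarrow> cell set \<Rightarrow> (cell \<Rightarrow> dentry option)" where
  "add_dots T B = (\<lambda>c. if c \<in> B then Some Dot else map_option Num (T c))"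

definition antirect_step :: "(cell \<Rightarrow> nat option) \<Rightarrow> (cell \<Rightarrow> nat option) \<Rightarrow> bool" where
  "antirect_step T T' \<longleftrightarrow> inc_tab T \<and>
     (\<exists>m B. (\<forall>c v. T c = Some v \<longrightarrow> v \<le> m) \<and> B \<inter> dom T = {} \<and>
        sInc m (add_dots T B) \<and> T' = undot (rev_moves m (add_dots T B)))"

inductive antirect :: "(cell \<Rightarrow> nat option) \<Rightarrow> (cell \<Rightarrow> nat option) \<Rightarrow> bool" where
  stop: "antinormal (dom T) \<Longrightarrow> antirect T T"
| next_step: "\<not> antinormal (dom T) \<Longrightarrow> antirect_step T T'' \<Longrightarrow> antirect T'' T' \<Longrightarrow> antirect T T'"

definition col :: "(cell \<Rightarrow> nat option) \<Rightarrow> nat \<Rightarrow> nat set" where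
  "col T j = {v. \<exists>i. T (i,j) = Some v}"

fun tri_aux :: "nat set \<Rightarrow> nat list \<Rightarrow> nat set \<Rightarrow> nat set" where
  "tri_aux T [] A = A"
| "tri_aux T (s # ss) A =
     tri_aux T ss (let c = {t \<in> T. t < s \<and> t \<notin> A} in if c = {} then A else insert (Max c) A)"

definition tri :: "nat set \<Rightarrow> nat set \<Rightarrow> nat set" (infixr "\<triangleleft>" 65) where
  "T \<triangleleft> S = tri_aux T (rev (sorted_list_of_set S)) {}"

definition Pij :: "(cell \<Rightarrow> nat option) \<Rightarrow> nat \<Rightarrow> nat \<Rightarrow> nat set" where
  "Pij P i j = foldr (\<lambda>k acc. col P k \<triangleleft> acc) [i..<j] (col P j)"

end

theory Submission
  imports Defs
begin

text \<open>
  \<open>T \<triangleleft> S\<close> is the greatest subset of \<open>T\<close>, in the dominance order comparing the numbers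
  of elements \<open>\<ge> t\<close> for every \<open>t\<close>, that can be matched injectively into \<open>S\<close> with every
  element sent to a larger one. Consequently \<open>P\<^sub>1\<^sub>,\<^sub>C\<close> is the greatest possible first member of a
  chain \<open>B\<^sub>1 \<subseteq> P\<^sub>1, \<dots>, B\<^sub>C \<subseteq> P\<^sub>C\<close> in which each \<open>B\<^sub>l\<close> matches into \<open>B\<^sub>l\<^sub>+\<^sub>1\<close>.

  A reverse K-jeu-de-taquin move for the value \<open>k\<close> only moves entries \<open>k\<close>, each at most
  one column to the right, and the rows of the tableau supply the counting inequalities that let any
  chain for the columns before the move be rerouted into a chain for the columns after it, and
  back, without lowering its first member. So \<open>P\<^sub>1\<^sub>,\<^sub>C\<close> is invariant under anti-rectification.
  In an anti-normal tableau whose last column is \<open>C\<close> every row runs to column \<open>C\<close>, so each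
  column matches into the next and \<open>P\<^sub>1\<^sub>,\<^sub>C\<close> is simply column 1.
\<close>

section \<open>A recursion for \<open>\<triangleleft>\<close>\<close>

lemma sorted_list_of_set_insert_greater:
  fixes b :: nat
  assumes "finite A" "\<forall>a\<in>A. a < b"
  shows "sorted_list_of_set (insert b A) = sorted_list_of_set A @ [b]"
proof -
  have "insort b xs = xs @ [b]" if "\<forall>x\<in>set xs. x < b" for xs
    using that by (induction xs) auto
  moreover have "b \<notin> A" using assms(2) by blast
  ultimately show ?thesis using assms by (simp add: sorted_list_of_set_insert)
qed

lemma tri_aux_eq_union: "tri_aux T ss A = A \<union> tri_aux (T - A) ss {}"
proof (induction ss arbitrary: A T)
  case Nil
  then show ?case by simp
next
  case (Cons s ss)
  define c where "c = {t \<in> T. t < s \<and> t \<notin> A}"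
  have "{t \<in> T - A. t < s \<and> t \<notin> {}} = c" by (auto simp: c_def)
  then have step: "tri_aux T (s # ss) A = tri_aux T ss (if c = {} then A else insert (Max c) A)"
    and step': "tri_aux (T - A) (s # ss) {} = tri_aux (T - A) ss (if c = {} then {} else {Max c})"
    by (simp_all only: tri_aux.simps Let_def c_def)
  show ?case
  proof (cases "c = {}")
    case True
    then show ?thesis
      using step step' Cons.IH[where A = A and T = T] by simp
  next
    case False
    have "T - insert (Max c) A = T - A - {Max c}" by auto
    then show ?thesis
      using False step step' Cons.IH[where A = "insert (Max c) A" and T = T]
        Cons.IH[where A = "{Max c}" and T = "T - A"] by simp
  qed
qed

lemma tri_aux_subset: "tri_aux T ss A \<subseteq> A \<union> T"
proof (induction ss arbitrary: A)
  case Nil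
  then show ?case by simp
next
  case (Cons s ss)
  let ?c = "{t \<in> T. t < s \<and> t \<notin> A}"
  have "finite ?c" by (rule finite_subset[of _ "{..<s}"]) auto
  then have "?c \<noteq> {} \<Longrightarrow> Max ?c \<in> T" using Max_in by blast
  then show ?case using Cons.IH by (auto simp: Let_def)
qed

lemma tri_subset: "T \<triangleleft> S \<subseteq> T"
  unfolding tri_def using tri_aux_subset by blast

lemma tri_empty [simp]: "T \<triangleleft> {} = {}"
  by (simp add: tri_def)

lemma tri_insert_greater:
  assumes "finite S" "\<forall>x\<in>S. x < s"
  shows "T \<triangleleft> insert s S =
    (if {t \<in> T. t < s} = {} then T \<triangleleft> S
     else insert (Max {t \<in> T. t < s}) ((T - {Max {t \<in> T. t < s}}) \<triangleleft> S))"
proof -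
  define c where "c = {t \<in> T. t < s}"
  have "T \<triangleleft> insert s S = tri_aux T (rev (sorted_list_of_set S)) (if c = {} then {} else {Max c})"
    by (auto simp: tri_def sorted_list_of_set_insert_greater[OF assms] c_def)
  then show ?thesis
    using tri_aux_eq_union[of T _ "{Max c}"] unfolding c_def[symmetric]
    by (cases "c = {}") (simp_all add: tri_def)
qed

lemma tri_insert_greater_none:
  assumes "finite S" "\<forall>x\<in>S. x < s" "\<forall>t\<in>T. s \<le> t"
  shows "T \<triangleleft> insert s S = T \<triangleleft> S"
proof -
  have "{t \<in> T. t < s} = {}" using assms(3) by auto
  then show ?thesis by (simp only: tri_insert_greater[OF assms(1,2)] if_P)
qed

lemma tri_insert_greater_Max:
  assumes "finite S" "\<forall>x\<in>S. x < s" "t0 \<in> T" "t0 < s" "\<forall>t\<in>T. t < s \<longrightarrow> t \<le> t0"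
  shows "T \<triangleleft> insert s S = insert t0 ((T - {t0}) \<triangleleft> S)"
proof -
  have "Max {t \<in> T. t < s} = t0" using assms(3-5) by (intro Max_eqI) auto
  moreover have "{t \<in> T. t < s} \<noteq> {}" using assms(3,4) by auto
  ultimately show ?thesis by (simp only: tri_insert_greater[OF assms(1,2)] if_False)
qed

section \<open>Matchable sets and the dominance order\<close>

definition tail_le :: "nat set \<Rightarrow> nat set \<Rightarrow> bool" where
  "tail_le A B \<longleftrightarrow> (\<forall>t. card (A \<inter> {t..}) \<le> card (B \<inter> {t..}))"

text \<open>By Hall's theorem, \<open>matchable A S\<close> says that \<open>A\<close> injects into \<open>S\<close> by a map \<open>f\<close> with
  \<open>a < f a\<close>.\<close>
definition matchable :: "nat set \<Rightarrow> nat set \<Rightarrow> bool" where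
  "matchable A S \<longleftrightarrow> (\<forall>t. card (A \<inter> {t..}) \<le> card (S \<inter> {t<..}))"

lemma card_insert_Int_atLeast:
  fixes a t :: nat
  assumes "finite A" "a \<notin> A"
  shows "card (insert a A \<inter> {t..}) = (if t \<le> a then Suc (card (A \<inter> {t..})) else card (A \<inter> {t..}))"
  using assms by (auto simp: Int_insert_left)

lemma card_insert_Int_greaterThan:
  fixes a t :: nat
  assumes "finite A" "a \<notin> A"
  shows "card (insert a A \<inter> {t<..}) = (if t < a then Suc (card (A \<inter> {t<..})) else card (A \<inter> {t<..}))"
  using assms by (auto simp: Int_insert_left)

lemma tail_le_refl: "tail_le A A"
  by (simp add: tail_le_def)

lemma tail_le_trans: "tail_le A B \<Longrightarrow> tail_le B C \<Longrightarrow> tail_le A C"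
  unfolding tail_le_def using le_trans by blast

lemma tail_le_subset: "A \<subseteq> B \<Longrightarrow> finite B \<Longrightarrow> tail_le A B"
  unfolding tail_le_def by (meson Int_mono card_mono finite_Int order_refl)

lemma tail_le_antisym:
  assumes "finite A" "finite B" "tail_le A B" "tail_le B A"
  shows "A = B"
proof (rule set_eqI)
  fix x
  have tails: "card (A \<inter> {t..}) = card (B \<inter> {t..})" for t
    using assms(3,4) unfolding tail_le_def by (meson le_antisym)
  have "x \<in> X \<longleftrightarrow> card (X \<inter> {x..}) = Suc (card (X \<inter> {Suc x..}))" if "finite X" for X
  proof -
    have "X \<inter> {x..} = (if x \<in> X then insert x (X \<inter> {Suc x..}) else X \<inter> {Suc x..})"
      by (auto simp: Suc_le_eq order_le_less)
    then show ?thesis using that by simp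
  qed
  then show "x \<in> A \<longleftrightarrow> x \<in> B" using assms(1,2) tails[of x] tails[of "Suc x"] by simp
qed

lemma tail_le_insert_insert:
  assumes "finite A" "finite B" "a \<notin> A" "b \<notin> B" "a \<le> b" "tail_le A B"
  shows "tail_le (insert a A) (insert b B)"
  unfolding tail_le_def
proof
  fix t
  have "card (A \<inter> {t..}) \<le> card (B \<inter> {t..})" using assms(6) by (simp add: tail_le_def)
  then show "card (insert a A \<inter> {t..}) \<le> card (insert b B \<inter> {t..})"
    using assms(1-5) card_insert_Int_atLeast[of A a t] card_insert_Int_atLeast[of B b t] by auto
qed

lemma matchable_tail_le_left: "tail_le A' A \<Longrightarrow> matchable A S \<Longrightarrow> matchable A' S"
  unfolding matchable_def tail_le_def using le_trans by blast

lemma matchable_tail_le_right: "matchable A S \<Longrightarrow> tail_le S S' \<Longrightarrow> matchable A S'"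
proof -
  have "{t<..} = {Suc t..}" for t by auto
  then show "matchable A S \<Longrightarrow> tail_le S S' \<Longrightarrow> matchable A S'"
    unfolding matchable_def tail_le_def using le_trans by metis
qed

lemma matchable_imp_greater:
  assumes "finite A" "matchable A S" "a \<in> A"
  shows "\<exists>s\<in>S. a < s"
proof -
  have "0 < card (A \<inter> {a..})" using assms(1,3) card_gt_0_iff by blast
  also have "\<dots> \<le> card (S \<inter> {a<..})" using assms(2) unfolding matchable_def by blast
  finally show ?thesis by (metis card.empty disjoint_iff greaterThan_iff less_irrefl)
qed

lemma matchable_insert_insert:
  assumes "finite A" "finite S" "a \<notin> A" "s \<notin> S" "a < s" "matchable A S"
  shows "matchable (insert a A) (insert s S)"
  unfolding matchable_def
proof
  fix t
  have "card (A \<inter> {t..}) \<le> card (S \<inter> {t<..})" using assms(6) by (simp add: matchable_def)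
  then show "card (insert a A \<inter> {t..}) \<le> card (insert s S \<inter> {t<..})"
    using assms(1-5) card_insert_Int_atLeast[of A a t] card_insert_Int_greaterThan[of S s t] by auto
qed

lemma matchable_remove_greatest:
  assumes "finite A" "finite S" "\<forall>y\<in>A. y < a" "\<forall>y\<in>S. y < s" "a < s"
    and "matchable (insert a A) (insert s S)"
  shows "matchable A S"
  unfolding matchable_def
proof
  fix t
  show "card (A \<inter> {t..}) \<le> card (S \<inter> {t<..})"
  proof (cases "t \<le> a")
    case True
    have "a \<notin> A" "s \<notin> S" using assms(3,4) by auto
    moreover have "card (insert a A \<inter> {t..}) \<le> card (insert s S \<inter> {t<..})"
      using assms(6) unfolding matchable_def by blast
    ultimately show ?thesis
      using True assms(1,2,5) card_insert_Int_atLeast[of A a t] card_insert_Int_greaterThan[of S s t]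
      by simp
  next
    case False
    then have "A \<inter> {t..} = {}" using assms(3) by fastforce
    then show ?thesis by simp
  qed
qed

lemma matchable_remove_Max:
  assumes "finite A" "A \<noteq> {}" "finite S" "\<forall>y\<in>S. y < s" "matchable A (insert s S)"
  shows "Max A < s" "matchable (A - {Max A}) S"
proof -
  have "\<forall>a\<in>A. a < s" using matchable_imp_greater[OF assms(1,5)] assms(4) by fastforce
  then show "Max A < s" using assms(1,2) by simp
  moreover have "\<forall>y\<in>A - {Max A}. y < Max A" using Max_ge[OF assms(1)] by fastforce
  ultimately show "matchable (A - {Max A}) S"
    using matchable_remove_greatest[of "A - {Max A}" S "Max A" s] assms
    by (simp add: insert_absorb)
qed

lemma finite_tri: "finite T \<Longrightarrow> finite (T \<triangleleft> S)"
  using tri_subset finite_subset by blast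

lemma Max_Collect_less:
  fixes T :: "nat set"
  assumes "finite T" "t \<in> T" "t < s"
  shows "Max {t \<in> T. t < s} \<in> T" "Max {t \<in> T. t < s} < s" "t \<le> Max {t \<in> T. t < s}"
proof -
  have "finite {t \<in> T. t < s}" "{t \<in> T. t < s} \<noteq> {}" using assms by auto
  then have "Max {t \<in> T. t < s} \<in> {t \<in> T. t < s}" by (rule Max_in)
  then show "Max {t \<in> T. t < s} \<in> T" "Max {t \<in> T. t < s} < s" by auto
  show "t \<le> Max {t \<in> T. t < s}" using assms by (intro Max_ge) auto
qed

lemma tri_matchable:
  assumes "finite T" "finite S"
  shows "matchable (T \<triangleleft> S) S"
  using assms(2,1)
proof (induction S arbitrary: T rule: finite_linorder_max_induct)
  case empty
  then show ?case by (simp add: matchable_def)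
next
  case (insert s S)
  show ?case
  proof (cases "\<exists>t\<in>T. t < s")
    case False
    then have "T \<triangleleft> insert s S = T \<triangleleft> S"
      by (intro tri_insert_greater_none[OF insert(1,2)]) (auto simp: not_less)
    then show ?thesis
      using insert.IH[OF insert.prems] tail_le_subset[of S "insert s S"] insert(1)
      by (simp add: matchable_tail_le_right subset_insertI)
  next
    case True
    define t0 where "t0 = Max {t \<in> T. t < s}"
    have t0: "t0 \<in> T" "t0 < s" "\<forall>t\<in>T. t < s \<longrightarrow> t \<le> t0"
      using True Max_Collect_less[OF insert.prems] unfolding t0_def by blast+
    have "t0 \<notin> (T - {t0}) \<triangleleft> S" "s \<notin> S" using tri_subset insert(2) by blast+
    then show ?thesis
      using tri_insert_greater_Max[OF insert(1,2) t0] insert t0 finite_tri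
      by (simp add: matchable_insert_insert)
  qed
qed

lemma tri_greatest:
  assumes "finite T" "finite S" "A \<subseteq> T" "matchable A S"
  shows "tail_le A (T \<triangleleft> S)"
  using assms(2,1,3,4)
proof (induction S arbitrary: T A rule: finite_linorder_max_induct)
  case empty
  then have "A = {}" using matchable_imp_greater[OF finite_subset] by blast
  then show ?case by (simp add: tail_le_def)
next
  case (insert s S)
  show ?case
  proof (cases "A = {}")
    case True
    then show ?thesis by (simp add: tail_le_def)
  next
    case False
    define x where "x = Max A"
    define t0 where "t0 = Max {t \<in> T. t < s}"
    have finA: "finite A" using finite_subset[OF insert.prems(2,1)] .
    have x: "x \<in> A" "x < s" and matchable: "matchable (A - {x}) S"
      using Max_in[OF finA False] matchable_remove_Max[OF finA False insert(1,2) insert.prems(3)]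
      unfolding x_def by auto
    then have t0: "t0 \<in> T" "t0 < s" "x \<le> t0"
      using Max_Collect_less[OF insert.prems(1)] insert.prems(2) unfolding t0_def by blast+
    have t0_greatest: "\<forall>t\<in>T. t < s \<longrightarrow> t \<le> t0"
      using Max_Collect_less(3)[OF insert.prems(1)] unfolding t0_def by blast
    have "A - {x} \<subseteq> T - {t0}"
      using Max_ge[OF finA] t0(3) insert.prems(2) unfolding x_def by fastforce
    then have "tail_le (A - {x}) ((T - {t0}) \<triangleleft> S)"
      using insert.IH[of "T - {t0}" "A - {x}"] insert.prems(1) matchable by simp
    moreover have "t0 \<notin> (T - {t0}) \<triangleleft> S" using tri_subset by blast
    ultimately have "tail_le (insert x (A - {x})) (insert t0 ((T - {t0}) \<triangleleft> S))"
      using finA finite_tri[of "T - {t0}"] insert.prems(1) t0(3)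
      by (intro tail_le_insert_insert) auto
    then show ?thesis
      using tri_insert_greater_Max[OF insert(1,2) t0(1,2) t0_greatest] x by (simp add: insert_absorb)
  qed
qed

section \<open>Nested \<open>\<triangleleft>\<close> and matching chains\<close>

definition nested_tri :: "(nat \<Rightarrow> nat set) \<Rightarrow> nat \<Rightarrow> nat \<Rightarrow> nat set" where
  "nested_tri U i j = foldr (\<lambda>k acc. U k \<triangleleft> acc) [i..<j] (U j)"

lemma Pij_eq_nested_tri: "Pij P i j = nested_tri (col P) i j"
  by (simp add: Pij_def nested_tri_def)

lemma nested_tri_same [simp]: "nested_tri U j j = U j"
  by (simp add: nested_tri_def)

lemma nested_tri_less: "i < j \<Longrightarrow> nested_tri U i j = U i \<triangleleft> nested_tri U (Suc i) j"
  by (simp add: nested_tri_def upt_conv_Cons)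

lemma nested_tri_subset: "i \<le> j \<Longrightarrow> nested_tri U i j \<subseteq> U i"
  by (cases "i < j") (auto simp: nested_tri_less tri_subset)

lemma finite_nested_tri:
  assumes "\<And>l. finite (U l)" "i \<le> j"
  shows "finite (nested_tri U i j)"
  using finite_subset[OF nested_tri_subset[OF assms(2)] assms(1)] .

definition matching_chain :: "(nat \<Rightarrow> nat set) \<Rightarrow> nat \<Rightarrow> nat \<Rightarrow> (nat \<Rightarrow> nat set) \<Rightarrow> bool" where
  "matching_chain U i j B \<longleftrightarrow> (\<forall>l. i \<le> l \<and> l \<le> j \<longrightarrow> B l \<subseteq> U l) \<and>
     (\<forall>l. i \<le> l \<and> l < j \<longrightarrow> matchable (B l) (B (Suc l)))"

lemma matching_chain_nested_tri:
  assumes "\<And>l. finite (U l)"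
  shows "matching_chain U i j (\<lambda>l. nested_tri U l j)"
  unfolding matching_chain_def
proof (intro conjI allI impI)
  fix l
  assume "i \<le> l \<and> l \<le> j"
  then show "nested_tri U l j \<subseteq> U l" by (simp add: nested_tri_subset)
next
  fix l
  assume "i \<le> l \<and> l < j"
  then show "matchable (nested_tri U l j) (nested_tri U (Suc l) j)"
    using tri_matchable assms finite_nested_tri[OF assms, of "Suc l" j] by (simp add: nested_tri_less)
qed

lemma matching_chain_tail_le_nested_tri:
  assumes fin: "\<And>l. finite (U l)" and "matching_chain U i j B" "i \<le> j"
  shows "tail_le (B i) (nested_tri U i j)"
  using assms(2,3)
proof (induction "j - i" arbitrary: i)
  case 0
  then show ?case using fin by (simp add: matching_chain_def tail_le_subset)
next
  case (Suc n)
  then have "i < j" by simp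
  moreover have "matching_chain U (Suc i) j B" using Suc.prems by (simp add: matching_chain_def)
  ultimately have "tail_le (B (Suc i)) (nested_tri U (Suc i) j)" using Suc.hyps by simp
  then have "matchable (B i) (nested_tri U (Suc i) j)"
    using Suc.prems \<open>i < j\<close> matchable_tail_le_right unfolding matching_chain_def by blast
  moreover have "B i \<subseteq> U i" using Suc.prems \<open>i < j\<close> by (simp add: matching_chain_def)
  ultimately show ?case
    using tri_greatest fin finite_nested_tri[OF fin, of "Suc i" j] \<open>i < j\<close>
    by (simp add: nested_tri_less)
qed

lemma nested_tri_eq_if_matching:
  assumes "\<And>l. finite (U l)" "\<And>l. i \<le> l \<Longrightarrow> l < j \<Longrightarrow> matchable (U l) (U (Suc l))" "i \<le> j"
  shows "nested_tri U i j = U i"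
proof (rule tail_le_antisym)
  have "matching_chain U i j U" using assms(2) by (simp add: matching_chain_def)
  then show "tail_le (U i) (nested_tri U i j)"
    using matching_chain_tail_le_nested_tri[where U = U, OF assms(1) _ assms(3)] by blast
  show "tail_le (nested_tri U i j) (U i)"
    using nested_tri_subset assms(1,3) by (simp add: tail_le_subset)
qed (simp_all add: assms(1) finite_nested_tri[OF assms(1,3)])

lemma nested_tri_eq_if_heads_dominated:
  assumes finU: "\<And>l. finite (U l)" and finV: "\<And>l. finite (V l)" and "i \<le> j"
    and sub: "\<And>l. U l \<subseteq> V l"
    and heads: "\<And>B. matching_chain V i j B \<Longrightarrow> \<exists>B'. matching_chain U i j B' \<and> tail_le (B i) (B' i)"
  shows "nested_tri U i j = nested_tri V i j"
proof (rule tail_le_antisym)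
  have "matching_chain U i j (\<lambda>l. nested_tri U l j)" by (rule matching_chain_nested_tri[where U = U, OF finU])
  then have "matching_chain V i j (\<lambda>l. nested_tri U l j)"
    using sub unfolding matching_chain_def by fast
  from matching_chain_tail_le_nested_tri[where U = V, OF finV this \<open>i \<le> j\<close>]
  show "tail_le (nested_tri U i j) (nested_tri V i j)" by simp
  obtain B' where B': "matching_chain U i j B'" "tail_le (nested_tri V i j) (B' i)"
    using heads[OF matching_chain_nested_tri[where U = V, OF finV]] by auto
  show "tail_le (nested_tri V i j) (nested_tri U i j)"
    using tail_le_trans[OF B'(2) matching_chain_tail_le_nested_tri[where U = U, OF finU B'(1) \<open>i \<le> j\<close>]] .
qed (simp_all add: finite_nested_tri[OF finU \<open>i \<le> j\<close>] finite_nested_tri[OF finV \<open>i \<le> j\<close>])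

lemma matching_chain_replace:
  assumes chain: "matching_chain V i j B"
    and keep: "\<And>l. i \<le> l \<Longrightarrow> l \<le> j \<Longrightarrow> \<not> M l \<Longrightarrow> B l \<subseteq> U l"
    and new: "\<And>l. M l \<Longrightarrow> B' l \<subseteq> U l"
    and sparse: "\<And>l. M l \<Longrightarrow> \<not> M (Suc l)"
    and left: "\<And>l. M l \<Longrightarrow> i < l \<Longrightarrow> l \<le> j \<Longrightarrow> matchable (B (l - 1)) (B' l)"
    and right: "\<And>l. M l \<Longrightarrow> i \<le> l \<Longrightarrow> l < j \<Longrightarrow> matchable (B' l) (B (Suc l))"
  shows "matching_chain U i j (\<lambda>l. if M l then B' l else B l)"
  unfolding matching_chain_def
proof (intro conjI allI impI)
  fix l
  assume "i \<le> l \<and> l \<le> j"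
  then show "(if M l then B' l else B l) \<subseteq> U l" using keep new by auto
next
  fix l
  assume l: "i \<le> l \<and> l < j"
  have "matchable (B l) (B (Suc l))" using chain l by (simp add: matching_chain_def)
  then show "matchable (if M l then B' l else B l) (if M (Suc l) then B' (Suc l) else B (Suc l))"
    using l sparse right left[of "Suc l"] by auto
qed

section \<open>Exchanging the entry \<open>k\<close> in a matching chain\<close>

lemma card_Int_atLeast_split:
  fixes a b :: nat
  assumes "finite X" "a \<le> b"
  shows "card (X \<inter> {a..}) = card (X \<inter> {a..<b}) + card (X \<inter> {b..})"
proof -
  have "X \<inter> {a..} = (X \<inter> {a..<b}) \<union> (X \<inter> {b..})" using assms(2) by auto
  then show ?thesis using assms(1) by (simp add: card_Un_disjoint ivl_disj_int_one(4) disjoint_iff)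
qed

lemma card_exchange:
  assumes "finite X" "k \<in> X" "z \<notin> X"
  shows "card (insert z (X - {k})) = card X"
  using assms card.remove[of X k] card_insert_disjoint[of "X - {k}" z] by simp

lemma card_exchange_Int_greaterThan:
  fixes t :: nat
  assumes "finite B" "k \<in> B" "z \<notin> B" "t < z" "t < k"
  shows "card (insert z (B - {k}) \<inter> {t<..}) = card (B \<inter> {t<..})"
proof -
  have "insert z (B - {k}) \<inter> {t<..} = insert z ((B \<inter> {t<..}) - {k})" using assms(4) by auto
  moreover have "k \<in> B \<inter> {t<..}" using assms(2,5) by simp
  ultimately show ?thesis using assms(1,3) card_exchange[of "B \<inter> _" k z] by simp
qed

lemma card_exchange_Int_atLeast:
  fixes t :: nat
  assumes "finite B" "k \<in> B" "z \<notin> B" "t \<le> z" "t \<le> k"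
  shows "card (insert z (B - {k}) \<inter> {t..}) = card (B \<inter> {t..})"
proof -
  have "insert z (B - {k}) \<inter> {t..} = insert z ((B \<inter> {t..}) - {k})" using assms(4) by auto
  moreover have "k \<in> B \<inter> {t..}" using assms(2,5) by simp
  ultimately show ?thesis using assms(1,3) card_exchange[of "B \<inter> _" k z] by simp
qed

lemma tail_le_exchange:
  assumes "finite B" "k \<in> B" "z \<notin> B" "z \<le> k"
  shows "tail_le (insert z (B - {k})) B"
proof -
  have "tail_le (insert z (B - {k})) (insert k (B - {k}))"
    using assms by (intro tail_le_insert_insert) (auto simp: tail_le_refl)
  then show ?thesis using assms(2) by (simp add: insert_absorb)
qed

lemma card_Int_greaterThan_split:
  fixes t k :: nat
  assumes "finite X" "t < k"
  shows "card (X \<inter> {t<..<k}) + card (X \<inter> {k<..}) \<le> card (X \<inter> {t<..})"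
proof -
  have "(X \<inter> {t<..<k}) \<union> (X \<inter> {k<..}) \<subseteq> X \<inter> {t<..}" using assms(2) by auto
  moreover have "(X \<inter> {t<..<k}) \<inter> (X \<inter> {k<..}) = {}" by auto
  ultimately show ?thesis using assms(1) by (metis card_Un_disjoint card_mono finite_Int)
qed

lemma matchable_card_below_gap:
  fixes t k :: nat
  assumes "finite Tp" "finite B2" "A \<subseteq> Tp" "matchable A B" "t < k"
    and gap: "card (Tp \<inter> {t..<k}) \<le> card (T \<inter> {t<..<k})"
    and "T \<inter> {t<..<k} \<subseteq> B2" "B \<inter> {k<..} \<subseteq> B2"
  shows "card (A \<inter> {t..}) \<le> card (B2 \<inter> {t<..})"
proof -
  have "finite A" using finite_subset[OF assms(3,1)] .
  then have "card (A \<inter> {t..}) = card (A \<inter> {t..<k}) + card (A \<inter> {k..})"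
    using card_Int_atLeast_split assms(5) by simp
  also have "card (A \<inter> {t..<k}) \<le> card (Tp \<inter> {t..<k})" using assms(1,3) by (intro card_mono) auto
  also have "card (A \<inter> {k..}) \<le> card (B \<inter> {k<..})" using assms(4) by (simp add: matchable_def)
  also note gap
  also have "card (T \<inter> {t<..<k}) \<le> card (B2 \<inter> {t<..<k})" using assms(2,7) by (intro card_mono) auto
  also have "card (B \<inter> {k<..}) \<le> card (B2 \<inter> {k<..})" using assms(2,8) by (intro card_mono) auto
  also have "card (B2 \<inter> {t<..<k}) + card (B2 \<inter> {k<..}) \<le> card (B2 \<inter> {t<..})"
    using card_Int_greaterThan_split[OF assms(2,5)] .
  finally show ?thesis by simp
qed

lemma matchable_remove_target:
  fixes k :: nat
  assumes "finite Tp" "finite B" "A \<subseteq> Tp" "matchable A B"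
    and gap: "\<And>t. card (Tp \<inter> {t..<k}) \<le> card (T \<inter> {t<..<k})"
    and full: "T \<inter> {..<k} \<subseteq> B"
  shows "matchable A (B - {k})"
  unfolding matchable_def
proof
  fix t
  show "card (A \<inter> {t..}) \<le> card ((B - {k}) \<inter> {t<..})"
  proof (cases "k \<le> t")
    case True
    then have "(B - {k}) \<inter> {t<..} = B \<inter> {t<..}" by auto
    then show ?thesis using assms(4) by (simp add: matchable_def)
  next
    case False
    have "T \<inter> {t<..<k} \<subseteq> B - {k}" "B \<inter> {k<..} \<subseteq> B - {k}" using full by auto
    moreover have "finite (B - {k})" "t < k" using assms(2) False by auto
    ultimately show ?thesis using matchable_card_below_gap[OF assms(1) _ assms(3,4) _ gap] by blast
  qed
qed

lemma matchable_exchange_target: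
  fixes k z :: nat
  assumes "finite Tp" "finite B" "A \<subseteq> Tp" "matchable A B" "k \<in> B" "z \<notin> B" "z < k"
    and gap: "\<And>t. card (Tp \<inter> {t..<k}) \<le> card (T \<inter> {t<..<k})"
    and full: "T \<inter> {z<..<k} \<subseteq> B"
  shows "matchable A (insert z (B - {k}))"
  unfolding matchable_def
proof
  fix t
  let ?B2 = "insert z (B - {k})"
  consider "k \<le> t" | "t < z" | "z \<le> t" "t < k" by linarith
  then show "card (A \<inter> {t..}) \<le> card (?B2 \<inter> {t<..})"
  proof cases
    case 1
    then have "?B2 \<inter> {t<..} = B \<inter> {t<..}" using assms(7) by auto
    then show ?thesis using assms(4) by (simp add: matchable_def)
  next
    case 2
    then have "card (?B2 \<inter> {t<..}) = card (B \<inter> {t<..})"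
      using assms(2,5,6,7) by (intro card_exchange_Int_greaterThan) auto
    then show ?thesis using assms(4) by (simp add: matchable_def)
  next
    case 3
    have "T \<inter> {t<..<k} \<subseteq> ?B2" "B \<inter> {k<..} \<subseteq> ?B2" using full 3 by auto
    moreover have "finite ?B2" using assms(2) by simp
    ultimately show ?thesis using matchable_card_below_gap[OF assms(1) _ assms(3,4) 3(2) gap] by blast
  qed
qed

lemma matchable_avoid_in_target:
  fixes k :: nat
  assumes "finite Tp" "finite T" "A \<subseteq> Tp" "B \<subseteq> insert k T" "k \<in> B" "k \<notin> T" "matchable A B"
    and gap: "\<And>t. card (Tp \<inter> {t..<k}) \<le> card (T \<inter> {t<..<k})"
  obtains B2 where "B2 \<subseteq> T" "matchable A B2" "tail_le B2 B"
proof -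
  have finB: "finite B" using finite_subset[OF assms(4)] assms(2) by simp
  show ?thesis
  proof (cases "T \<inter> {..<k} \<subseteq> B")
    case True
    have "B - {k} \<subseteq> T" using assms(4) by auto
    moreover have "matchable A (B - {k})"
      by (rule matchable_remove_target[OF assms(1) finB assms(3,7) gap True])
    moreover have "tail_le (B - {k}) B" using finB by (intro tail_le_subset) auto
    ultimately show ?thesis by (rule that)
  next
    case False
    define Z where "Z = T \<inter> {..<k} - B"
    define z where "z = Max Z"
    have finZ: "finite Z" and "Z \<noteq> {}" using assms(2) False by (auto simp: Z_def)
    then have "z \<in> Z" unfolding z_def by (rule Max_in)
    then have z: "z \<in> T" "z < k" "z \<notin> B" by (auto simp: Z_def)
    have full: "T \<inter> {z<..<k} \<subseteq> B"
    proof
      fix y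
      assume y: "y \<in> T \<inter> {z<..<k}"
      show "y \<in> B"
      proof (rule ccontr)
        assume "y \<notin> B"
        then have "y \<le> z" unfolding z_def using finZ y by (intro Max_ge) (auto simp: Z_def)
        then show False using y by auto
      qed
    qed
    have "insert z (B - {k}) \<subseteq> T" using assms(4) z(1) by auto
    moreover have "matchable A (insert z (B - {k}))"
      by (rule matchable_exchange_target[OF assms(1) finB assms(3,7,5) z(3,2) gap full])
    moreover have "tail_le (insert z (B - {k})) B" using finB assms(5) z by (intro tail_le_exchange) auto
    ultimately show ?thesis by (rule that)
  qed
qed

lemma matchable_card_above_gap:
  fixes k t :: nat
  assumes "finite A" "finite Tn" "Bn \<subseteq> Tn" "matchable A Bn" "k \<in> A" "k < t"
    and full: "T \<inter> {k<..<t} \<subseteq> A"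
    and gap: "card (Tn \<inter> {k<..t}) \<le> card (T \<inter> {k<..<t})"
  shows "Suc (card (A \<inter> {t..})) \<le> card (Bn \<inter> {t<..})"
proof -
  have finBn: "finite Bn" using finite_subset[OF assms(3,2)] .
  have "A \<inter> {k..} = insert k ((A \<inter> {k<..<t}) \<union> (A \<inter> {t..}))" using assms(5,6) by auto
  then have "card (A \<inter> {k..}) = Suc (card (A \<inter> {k<..<t}) + card (A \<inter> {t..}))"
    using assms(1,6) by (simp add: card_Un_disjoint disjoint_iff card_insert_if)
  moreover have "card (A \<inter> {k..}) \<le> card (Bn \<inter> {k<..})" using assms(4) by (simp add: matchable_def)
  moreover have "Bn \<inter> {k<..} = (Bn \<inter> {k<..t}) \<union> (Bn \<inter> {t<..})" using assms(6) by auto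
  then have "card (Bn \<inter> {k<..}) = card (Bn \<inter> {k<..t}) + card (Bn \<inter> {t<..})"
    using finBn by (simp add: card_Un_disjoint disjoint_iff)
  moreover have "card (Bn \<inter> {k<..t}) \<le> card (Tn \<inter> {k<..t})"
    using assms(2,3) by (intro card_mono) auto
  moreover have "card (T \<inter> {k<..<t}) \<le> card (A \<inter> {k<..<t})"
    using assms(1) full by (intro card_mono) auto
  ultimately show ?thesis using gap by linarith
qed

lemma matchable_source_has_larger:
  fixes k :: nat
  assumes "finite T" "finite A" "finite Tn" "Bn \<subseteq> Tn" "matchable A Bn" "k \<in> A"
    and gap: "\<And>t. card (Tn \<inter> {k<..t}) \<le> card (T \<inter> {k<..<t})"
  shows "\<exists>b\<in>T. k < b \<and> b \<notin> A"
proof (rule ccontr)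
  assume "\<not> ?thesis"
  then have full: "T \<inter> {k<..<t} \<subseteq> A" for t by auto
  define t where "t = Suc (Max (insert k (A \<union> Tn)))"
  have above: "x < t" if "x \<in> insert k (A \<union> Tn)" for x
    unfolding t_def using assms(2,3) that by (intro le_imp_less_Suc Max_ge) auto
  then have "A \<inter> {t..} = {}" "Bn \<inter> {t<..} = {}" and kt: "k < t" using assms(4) by fastforce+
  then show False using matchable_card_above_gap[OF assms(2-6) kt full gap] by simp
qed

lemma matchable_exchange_source:
  fixes k b :: nat
  assumes "finite A" "finite Tn" "Bn \<subseteq> Tn" "matchable A Bn" "k \<in> A" "b \<notin> A" "k < b"
    and gap: "\<And>t. card (Tn \<inter> {k<..t}) \<le> card (T \<inter> {k<..<t})"
    and full: "T \<inter> {k<..<b} \<subseteq> A"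
  shows "matchable (insert b (A - {k})) Bn"
  unfolding matchable_def
proof
  fix t
  let ?A2 = "insert b (A - {k})"
  consider "t \<le> k" | "b < t" | "k < t" "t \<le> b" by linarith
  then show "card (?A2 \<inter> {t..}) \<le> card (Bn \<inter> {t<..})"
  proof cases
    case 1
    then have "card (?A2 \<inter> {t..}) = card (A \<inter> {t..})"
      using assms(1,5,6,7) by (intro card_exchange_Int_atLeast) auto
    then show ?thesis using assms(4) by (simp add: matchable_def)
  next
    case 2
    then have "?A2 \<inter> {t..} = A \<inter> {t..}" using assms(7) by auto
    then show ?thesis using assms(4) by (simp add: matchable_def)
  next
    case 3
    then have "?A2 \<inter> {t..} = insert b (A \<inter> {t..})" by auto
    then have "card (?A2 \<inter> {t..}) = Suc (card (A \<inter> {t..}))" using assms(1,6) by simp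
    moreover have "T \<inter> {k<..<t} \<subseteq> A" using full 3 by auto
    ultimately show ?thesis using matchable_card_above_gap[OF assms(1-5) 3(1) _ gap] by simp
  qed
qed

lemma matchable_avoid_in_source:
  fixes k :: nat
  assumes "finite T" "finite Tn" "A \<subseteq> insert k T" "k \<in> A" "k \<notin> T" "Bn \<subseteq> Tn" "matchable A Bn"
    and gap: "\<And>t. card (Tn \<inter> {k<..t}) \<le> card (T \<inter> {k<..<t})"
  obtains A2 where "A2 \<subseteq> T" "matchable A2 Bn" "tail_le A A2"
proof -
  define Z where "Z = T \<inter> {k<..} - A"
  define b where "b = Min Z"
  have finA: "finite A" using finite_subset[OF assms(3)] assms(1) by simp
  have finZ: "finite Z" using assms(1) by (simp add: Z_def)
  moreover have "Z \<noteq> {}"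
    using matchable_source_has_larger[OF assms(1) finA assms(2,6,7,4) gap] by (auto simp: Z_def)
  ultimately have "b \<in> Z" unfolding b_def by (rule Min_in)
  then have b: "b \<in> T" "k < b" "b \<notin> A" by (auto simp: Z_def)
  have full: "T \<inter> {k<..<b} \<subseteq> A"
  proof
    fix y
    assume y: "y \<in> T \<inter> {k<..<b}"
    show "y \<in> A"
    proof (rule ccontr)
      assume "y \<notin> A"
      then have "b \<le> y" unfolding b_def using finZ y by (intro Min_le) (auto simp: Z_def)
      then show False using y by auto
    qed
  qed
  have "insert b (A - {k}) \<subseteq> T" using assms(3) b(1) by auto
  moreover have "matchable (insert b (A - {k})) Bn"
    by (rule matchable_exchange_source[OF finA assms(2,6,7,4) b(3,2) gap full])
  moreover have "tail_le A (insert b (A - {k}))"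
  proof -
    have "tail_le (insert k (A - {k})) (insert b (A - {k}))"
      using finA b(2,3) by (intro tail_le_insert_insert) (auto simp: tail_le_refl)
    then show ?thesis using assms(4) by (simp add: insert_absorb)
  qed
  ultimately show ?thesis by (rule that)
qed

lemma matching_chain_avoid_gained:
  fixes k :: nat
  assumes fin: "\<And>l. finite (T l)"
    and W: "\<And>l. W l \<subseteq> insert k (T l)"
    and gain: "\<And>l. i \<le> l \<Longrightarrow> l \<le> j \<Longrightarrow> k \<in> W l \<Longrightarrow> k \<notin> T l \<Longrightarrow>
      i < l \<and> k \<in> T (l - 1) \<and> (\<forall>t. card (T (l - 1) \<inter> {t..<k}) \<le> card (T l \<inter> {t<..<k}))"
    and chain: "matching_chain W i j B"
  shows "\<exists>B'. matching_chain T i j B' \<and> tail_le (B i) (B' i)"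
proof -
  define M where "M l \<longleftrightarrow> i \<le> l \<and> l \<le> j \<and> k \<in> B l \<and> k \<notin> T l" for l
  have gain_M: "i < l \<and> k \<in> T (l - 1) \<and> (\<forall>t. card (T (l - 1) \<inter> {t..<k}) \<le> card (T l \<inter> {t<..<k}))"
    if "M l" for l
    using that chain gain unfolding M_def matching_chain_def by blast
  have "\<exists>B2. B2 \<subseteq> T l \<and> matchable (B (l - 1)) B2 \<and> tail_le B2 (B l)" if M: "M l" for l
  proof -
    have l: "i \<le> l - 1" "l - 1 < j" "Suc (l - 1) = l" using gain_M[OF M] M by (auto simp: M_def)
    have "B (l - 1) \<subseteq> W (l - 1)" using chain l by (simp add: matching_chain_def)
    then have "B (l - 1) \<subseteq> insert k (T (l - 1))" using W[of "l - 1"] by blast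
    then have "B (l - 1) \<subseteq> T (l - 1)" using gain_M[OF M] by (simp add: insert_absorb)
    moreover have "B l \<subseteq> insert k (T l)" using chain M W by (auto simp: matching_chain_def M_def)
    moreover have "matchable (B (l - 1)) (B l)" using chain l by (metis matching_chain_def)
    moreover have "k \<in> B l" "k \<notin> T l" using M by (auto simp: M_def)
    moreover have "\<And>t. card (T (l - 1) \<inter> {t..<k}) \<le> card (T l \<inter> {t<..<k})" using gain_M[OF M] by blast
    ultimately show ?thesis using matchable_avoid_in_target[OF fin[of "l - 1"] fin[of l]] by metis
  qed
  then obtain f where f: "\<And>l. M l \<Longrightarrow> f l \<subseteq> T l \<and> matchable (B (l - 1)) (f l) \<and> tail_le (f l) (B l)"
    by metis
  have "matching_chain T i j (\<lambda>l. if M l then f l else B l)"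
  proof (rule matching_chain_replace[OF chain])
    show "B l \<subseteq> T l" if "i \<le> l" "l \<le> j" "\<not> M l" for l
      using that chain W unfolding M_def matching_chain_def by blast
    show "\<not> M (Suc l)" if "M l" for l
      using that gain_M[of "Suc l"] by (auto simp: M_def)
    show "matchable (f l) (B (Suc l))" if "M l" "i \<le> l" "l < j" for l
      using that f chain matchable_tail_le_left unfolding matching_chain_def by blast
  qed (use f in auto)
  moreover have "\<not> M i" using gain_M by blast
  ultimately show ?thesis using tail_le_refl by fastforce
qed

lemma matching_chain_avoid_lost:
  fixes k :: nat
  assumes fin: "\<And>l. finite (T l)"
    and W: "\<And>l. W l \<subseteq> insert k (T l)"
    and lose: "\<And>l. i \<le> l \<Longrightarrow> l \<le> j \<Longrightarrow> k \<in> W l \<Longrightarrow> k \<notin> T l \<Longrightarrow>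
      l < j \<and> k \<in> T (Suc l) \<and> (\<forall>t. card (T (Suc l) \<inter> {k<..t}) \<le> card (T l \<inter> {k<..<t}))"
    and chain: "matching_chain W i j B"
  shows "\<exists>B'. matching_chain T i j B' \<and> tail_le (B i) (B' i)"
proof -
  define M where "M l \<longleftrightarrow> i \<le> l \<and> l \<le> j \<and> k \<in> B l \<and> k \<notin> T l" for l
  have lose_M: "l < j \<and> k \<in> T (Suc l) \<and> (\<forall>t. card (T (Suc l) \<inter> {k<..t}) \<le> card (T l \<inter> {k<..<t}))"
    if "M l" for l
    using that chain lose unfolding M_def matching_chain_def by blast
  have "\<exists>A2. A2 \<subseteq> T l \<and> matchable A2 (B (Suc l)) \<and> tail_le (B l) A2" if M: "M l" for l
  proof -
    have "B (Suc l) \<subseteq> W (Suc l)" using chain M lose_M[OF M] by (simp add: matching_chain_def M_def)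
    then have "B (Suc l) \<subseteq> insert k (T (Suc l))" using W[of "Suc l"] by blast
    then have "B (Suc l) \<subseteq> T (Suc l)" using lose_M[OF M] by (simp add: insert_absorb)
    moreover have "B l \<subseteq> insert k (T l)" using chain M W by (auto simp: matching_chain_def M_def)
    moreover have "matchable (B l) (B (Suc l))" using chain M lose_M[OF M]
      by (auto simp: matching_chain_def M_def)
    moreover have "k \<in> B l" "k \<notin> T l" using M by (auto simp: M_def)
    moreover have "\<And>t. card (T (Suc l) \<inter> {k<..t}) \<le> card (T l \<inter> {k<..<t})" using lose_M[OF M] by blast
    ultimately show ?thesis using matchable_avoid_in_source[OF fin[of l] fin[of "Suc l"]] by metis
  qed
  then obtain f where f: "\<And>l. M l \<Longrightarrow> f l \<subseteq> T l \<and> matchable (f l) (B (Suc l)) \<and> tail_le (B l) (f l)"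
    by metis
  have "matching_chain T i j (\<lambda>l. if M l then f l else B l)"
  proof (rule matching_chain_replace[OF chain])
    show "B l \<subseteq> T l" if "i \<le> l" "l \<le> j" "\<not> M l" for l
      using that chain W unfolding M_def matching_chain_def by blast
    show "\<not> M (Suc l)" if "M l" for l
      using that lose_M by (auto simp: M_def)
    show "matchable (B (l - 1)) (f l)" if "M l" "i < l" "l \<le> j" for l
    proof -
      have "i \<le> l - 1" "l - 1 < j" "Suc (l - 1) = l" using that by auto
      then have "matchable (B (l - 1)) (B l)" using chain unfolding matching_chain_def by metis
      then show ?thesis using that f matchable_tail_le_right by blast
    qed
  qed (use f in auto)
  moreover have "tail_le (B i) (if M i then f i else B i)" using f tail_le_refl by simp
  ultimately show ?thesis by fastforce
qed

text \<open>Both families are compared with their union, which differs from each of them only in \<open>k\<close>.\<close>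
lemma nested_tri_eq_if_entry_shifts_right:
  fixes k :: nat
  assumes fin: "\<And>l. finite (T l)" and fin': "\<And>l. finite (T' l)"
    and other: "\<And>l. T' l - {k} = T l - {k}" and "i \<le> j"
    and gain: "\<And>l. k \<in> T' l \<Longrightarrow> k \<notin> T l \<Longrightarrow>
      i < l \<and> k \<in> T (l - 1) \<and> (\<forall>t. card (T (l - 1) \<inter> {t..<k}) \<le> card (T l \<inter> {t<..<k}))"
    and lose: "\<And>l. k \<in> T l \<Longrightarrow> k \<notin> T' l \<Longrightarrow>
      l < j \<and> k \<in> T' (Suc l) \<and> (\<forall>t. card (T (Suc l) \<inter> {k<..t}) \<le> card (T l \<inter> {k<..<t}))"
  shows "nested_tri T i j = nested_tri T' i j"
proof -
  define W where "W l = T l \<union> T' l" for l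
  have finW: "finite (W l)" for l using fin fin' by (simp add: W_def)
  have W: "W l \<subseteq> insert k (T l)" "W l \<subseteq> insert k (T' l)" for l
    using other[of l] unfolding W_def by blast+
  have off_k: "T' l \<inter> X = T l \<inter> X" if "k \<notin> X" for l X
    using other[of l] that by blast
  have "nested_tri T i j = nested_tri W i j"
  proof (rule nested_tri_eq_if_heads_dominated[where U = T and V = W, OF fin finW \<open>i \<le> j\<close>])
    show "T l \<subseteq> W l" for l by (simp add: W_def)
    show "\<exists>B'. matching_chain T i j B' \<and> tail_le (B i) (B' i)" if "matching_chain W i j B" for B
      using matching_chain_avoid_gained[where T = T and W = W, OF fin W(1) _ that] gain
      by (simp add: W_def)
  qed
  moreover have "nested_tri T' i j = nested_tri W i j"
  proof (rule nested_tri_eq_if_heads_dominated[where U = T' and V = W, OF fin' finW \<open>i \<le> j\<close>])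
    show "T' l \<subseteq> W l" for l by (simp add: W_def)
    show "\<exists>B'. matching_chain T' i j B' \<and> tail_le (B i) (B' i)" if "matching_chain W i j B" for B
      using matching_chain_avoid_lost[where T = T' and W = W, OF fin' W(2) _ that] lose off_k
      by (simp add: W_def)
  qed
  ultimately show ?thesis by simp
qed

section \<open>Skew tableaux and reverse K-jeu-de-taquin moves\<close>

lemma skew_pos: "skew S \<Longrightarrow> (r, c) \<in> S \<Longrightarrow> 1 \<le> r \<and> 1 \<le> c"
  unfolding skew_def young_def by blast

lemma skew_finite: "skew S \<Longrightarrow> finite S"
  unfolding skew_def young_def by auto

lemma skew_convex:
  assumes "skew S" "(r1, c1) \<in> S" "(r2, c2) \<in> S" "r1 \<le> r" "r \<le> r2" "c1 \<le> c" "c \<le> c2"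
  shows "(r, c) \<in> S"
proof -
  obtain L M where LM: "young L" "young M" "S = L - M" using assms(1) unfolding skew_def by blast
  have pos: "1 \<le> r1" "1 \<le> c1" using skew_pos[OF assms(1,2)] by auto
  have "(r, c) \<in> L" using LM assms(3-7) pos unfolding young_def by (meson DiffD1 order_trans)
  moreover have "(r1, c1) \<notin> M" using assms(2) LM(3) by blast
  then have "(r, c) \<notin> M" using LM(2) assms(4,6) pos unfolding young_def by blast
  ultimately show ?thesis using LM(3) by blast
qed

lemma undot_eq_Some: "undot D c = Some v \<longleftrightarrow> D c = Some (Num v)"
  unfolding undot_def by (auto split: option.splits dentry.splits)

lemma dom_undot_subset: "dom (undot D) \<subseteq> dom D"
  using undot_eq_Some by blast

lemma undot_add_dots: "B \<inter> dom T = {} \<Longrightarrow> undot (add_dots T B) = T"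
  unfolding undot_def add_dots_def by (rule ext) (auto split: option.splits)

lemma finite_col: "finite (dom T) \<Longrightarrow> finite (col T j)"
proof -
  have "col T j \<subseteq> (\<lambda>c. the (T c)) ` dom T" unfolding col_def by force
  then show "finite (dom T) \<Longrightarrow> finite (col T j)" using finite_subset by blast
qed

lemma card_col_Int_le:
  assumes "finite (dom T)"
    and inj: "\<And>i i' w. T (i, j') = Some w \<Longrightarrow> T (i', j') = Some w \<Longrightarrow> i = i'"
    and row: "\<And>i v. T (i, j) = Some v \<Longrightarrow> v \<in> X \<Longrightarrow> \<exists>w. T (i, j') = Some w \<and> w \<in> Y"
  shows "card (col T j \<inter> X) \<le> card (col T j' \<inter> Y)"
proof -
  define row_of where "row_of v = (SOME i. T (i, j) = Some v)" for v
  define f where "f v = the (T (row_of v, j'))" for v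
  have row_of: "T (row_of v, j) = Some v" if "v \<in> col T j" for v
    using that someI_ex[of "\<lambda>i. T (i, j) = Some v"] unfolding row_of_def col_def by blast
  have f: "T (row_of v, j') = Some (f v) \<and> f v \<in> Y" if "v \<in> col T j \<inter> X" for v
    using row[OF row_of] that unfolding f_def by fastforce
  have "inj_on f (col T j \<inter> X)"
  proof (rule inj_onI)
    fix v v'
    assume v: "v \<in> col T j \<inter> X" "v' \<in> col T j \<inter> X" "f v = f v'"
    then have "row_of v = row_of v'" using f inj by metis
    then show "v = v'" using row_of v by (metis IntD1 option.inject)
  qed
  moreover have "f ` (col T j \<inter> X) \<subseteq> col T j' \<inter> Y" using f unfolding col_def by blast
  ultimately show ?thesis using finite_col[OF assms(1)] by (meson card_inj_on_le finite_Int)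
qed

lemma sInc_row: "sInc k D \<Longrightarrow> D (i, j) = Some a \<Longrightarrow> D (i, j') = Some b \<Longrightarrow> j < j' \<Longrightarrow> dlt k a b"
  unfolding sInc_def by blast

lemma sInc_col: "sInc k D \<Longrightarrow> D (i, j) = Some a \<Longrightarrow> D (i', j) = Some b \<Longrightarrow> i < i' \<Longrightarrow> dlt k a b"
  unfolding sInc_def by blast

lemma sInc_skew: "sInc k D \<Longrightarrow> skew (dom D)"
  unfolding sInc_def by blast

lemma finite_dom_undot_sInc: "sInc k D \<Longrightarrow> finite (dom (undot D))"
  using sInc_skew skew_finite dom_undot_subset finite_subset by metis

lemma sInc_col_inj:
  assumes "sInc k D" "undot D (i, j) = Some w" "undot D (i', j) = Some w"
  shows "i = i'"
  using assms sInc_col[OF assms(1), of i j "Num w" i' "Num w"] sInc_col[OF assms(1), of i' j "Num w" i "Num w"]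
  by (auto simp: undot_eq_Some) (meson linorder_neqE_nat)

lemma no_entry_between_Num_Dot: "dlt k (Num k) y \<Longrightarrow> dlt k y Dot \<Longrightarrow> False"
  by (cases y) auto

lemma sInc_row_Num_Dot_adj:
  assumes S: "sInc k D" and "D (i, j) = Some (Num k)" "D (i, j') = Some Dot" "j < j'"
  shows "adj (i, j) (i, j')"
proof -
  have "j' = Suc j"
  proof (rule ccontr)
    assume "j' \<noteq> Suc j"
    then have "(i, Suc j) \<in> dom D"
      using skew_convex[OF sInc_skew[OF S], of i j i j' i "Suc j"] assms(2-4) by auto
    then obtain y where "D (i, Suc j) = Some y" by auto
    then show False
      using no_entry_between_Num_Dot sInc_row[OF S assms(2)] sInc_row[OF S _ assms(3)] \<open>j' \<noteq> Suc j\<close> assms(4)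
      by (metis Suc_lessI lessI)
  qed
  then show ?thesis by (simp add: adj_def)
qed

lemma sInc_col_Num_Dot_adj:
  assumes S: "sInc k D" and "D (i, j) = Some (Num k)" "D (i', j) = Some Dot" "i < i'"
  shows "adj (i, j) (i', j)"
proof -
  have "i' = Suc i"
  proof (rule ccontr)
    assume "i' \<noteq> Suc i"
    then have "(Suc i, j) \<in> dom D"
      using skew_convex[OF sInc_skew[OF S], of i j i' j "Suc i" j] assms(2-4) by auto
    then obtain y where "D (Suc i, j) = Some y" by auto
    then show False
      using no_entry_between_Num_Dot sInc_col[OF S assms(2)] sInc_col[OF S _ assms(3)] \<open>i' \<noteq> Suc i\<close> assms(4)
      by (metis Suc_lessI lessI)
  qed
  then show ?thesis by (simp add: adj_def)
qed

lemma adj_sym: "adj c c' \<Longrightarrow> adj c' c"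
  unfolding adj_def by auto

lemma adj_cases:
  assumes "adj (r, j) c'"
  obtains "c' = (r, Suc j)" | "1 \<le> j" "c' = (r, j - 1)" | "c' = (Suc r, j)" | "1 \<le> r" "c' = (r - 1, j)"
  using assms unfolding adj_def by (cases c') auto

lemma dom_kmove: "dom (kmove k D) = dom D"
  unfolding kmove_def by (auto split: option.splits dentry.splits)

lemma kmove_eq_Num_other: "v \<noteq> k \<Longrightarrow> kmove k D c = Some (Num v) \<longleftrightarrow> D c = Some (Num v)"
  unfolding kmove_def by (auto split: option.splits dentry.splits)

lemma kmove_eq_Num_self: "kmove k D c = Some (Num k) \<longleftrightarrow>
   (D c = Some (Num k) \<and> \<not> (\<exists>c'. adj c c' \<and> D c' = Some Dot)) \<or>
   (D c = Some Dot \<and> (\<exists>c'. adj c c' \<and> D c' = Some (Num k)))"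
  unfolding kmove_def by (auto split: option.splits dentry.splits)

lemma col_undot_kmove_other: "col (undot (kmove k D)) j - {k} = col (undot D) j - {k}"
  unfolding col_def undot_eq_Some using kmove_eq_Num_other by auto

lemma kmove_gain_cell:
  assumes S: "sInc k D" and "kmove k D (r, a) = Some (Num k)" "k \<notin> col (undot D) a"
  shows "D (r, a) = Some Dot \<and> D (r, a - 1) = Some (Num k) \<and> 1 < a"
proof -
  have "D (r, a) \<noteq> Some (Num k)" using assms(3) by (auto simp: col_def undot_eq_Some)
  then obtain c' where Dot: "D (r, a) = Some Dot" and c': "adj (r, a) c'" "D c' = Some (Num k)"
    using assms(2) kmove_eq_Num_self by blast
  from c'(1) show ?thesis
  proof (cases rule: adj_cases)
    case 2
    then have "1 \<le> a - 1" using skew_pos[OF sInc_skew[OF S], of r "a - 1"] c'(2) by auto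
    then show ?thesis using Dot c'(2) 2 by auto
  qed (use Dot c'(2) sInc_row[OF S] sInc_col[OF S] assms(3) in \<open>fastforce simp: col_def undot_eq_Some\<close>)+
qed

lemma kmove_gain_count:
  assumes S: "sInc k D" and Dot: "D (r, a) = Some Dot" and k: "D (r, a - 1) = Some (Num k)"
    and "1 < a" and notk: "k \<notin> col (undot D) a"
  shows "card (col (undot D) (a - 1) \<inter> {t..<k}) \<le> card (col (undot D) a \<inter> {t<..<k})"
proof (rule card_col_Int_le[OF finite_dom_undot_sInc[OF S]])
  show "i = i'" if "undot D (i, a) = Some w" "undot D (i', a) = Some w" for i i' w
    using sInc_col_inj[OF S that] .
  show "\<exists>w. undot D (i, a) = Some w \<and> w \<in> {t<..<k}"
    if "undot D (i, a - 1) = Some v" "v \<in> {t..<k}" for i v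
  proof -
    have v: "D (i, a - 1) = Some (Num v)" "t \<le> v" "v < k" using that by (auto simp: undot_eq_Some)
    have "i < r"
    proof (rule ccontr)
      assume "\<not> i < r"
      then have "r < i \<or> r = i" by auto
      then show False using sInc_col[OF S k v(1)] v k by auto
    qed
    have "(i, a) \<in> dom D"
      using skew_convex[OF sInc_skew[OF S], of i "a - 1" r a i a] v(1) Dot \<open>i < r\<close> by auto
    then obtain x where x: "D (i, a) = Some x" by auto
    then obtain w where w: "x = Num w" "w \<le> k" using sInc_col[OF S x Dot \<open>i < r\<close>] by (cases x) auto
    have "v < w" using sInc_row[OF S v(1) x] w \<open>1 < a\<close> by simp
    moreover have "w \<noteq> k" using notk x w by (auto simp: col_def undot_eq_Some)
    ultimately show ?thesis using x w v by (auto simp: undot_eq_Some)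
  qed
qed

lemma kmove_gain:
  assumes S: "sInc k D" and "k \<in> col (undot (kmove k D)) a" "k \<notin> col (undot D) a"
  shows "1 < a \<and> k \<in> col (undot D) (a - 1) \<and>
    (\<forall>t. card (col (undot D) (a - 1) \<inter> {t..<k}) \<le> card (col (undot D) a \<inter> {t<..<k}))"
proof -
  obtain r where "kmove k D (r, a) = Some (Num k)" using assms(2) by (auto simp: col_def undot_eq_Some)
  then have cell: "D (r, a) = Some Dot" "D (r, a - 1) = Some (Num k)" "1 < a"
    using kmove_gain_cell[OF S _ assms(3)] by auto
  then show ?thesis
    using kmove_gain_count[OF S cell assms(3)] by (auto simp: col_def undot_eq_Some)
qed

lemma kmove_lose_cell:
  assumes S: "sInc k D" and k: "D (r, j) = Some (Num k)" and "k \<notin> col (undot (kmove k D)) j"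
  shows "D (r, Suc j) = Some Dot \<and> D (Suc r, j) \<noteq> Some Dot"
proof -
  have below: "D (Suc r, j) \<noteq> Some Dot"
  proof
    assume "D (Suc r, j) = Some Dot"
    then have "kmove k D (Suc r, j) = Some (Num k)"
      using k kmove_eq_Num_self[of k D "(Suc r, j)"] by (auto simp: adj_def)
    then show False using assms(3) by (auto simp: col_def undot_eq_Some)
  qed
  have "kmove k D (r, j) \<noteq> Some (Num k)" using assms(3) by (auto simp: col_def undot_eq_Some)
  then obtain c' where c': "adj (r, j) c'" "D c' = Some Dot" using k kmove_eq_Num_self by blast
  from c'(1) have "D (r, Suc j) = Some Dot"
    by (cases rule: adj_cases)
      (use c'(2) below sInc_row[OF S _ k] sInc_col[OF S _ k] in \<open>fastforce+\<close>)
  with below show ?thesis by blast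
qed

lemma kmove_lose_count:
  assumes S: "sInc k D" and k: "D (r, j) = Some (Num k)" and Dot: "D (r, Suc j) = Some Dot"
    and below: "D (Suc r, j) \<noteq> Some Dot"
  shows "card (col (undot D) (Suc j) \<inter> {k<..t}) \<le> card (col (undot D) j \<inter> {k<..<t})"
proof (rule card_col_Int_le[OF finite_dom_undot_sInc[OF S]])
  show "i = i'" if "undot D (i, j) = Some v" "undot D (i', j) = Some v" for i i' v
    using sInc_col_inj[OF S that] .
  show "\<exists>v. undot D (i, j) = Some v \<and> v \<in> {k<..<t}"
    if "undot D (i, Suc j) = Some w" "w \<in> {k<..t}" for i w
  proof -
    have w: "D (i, Suc j) = Some (Num w)" "k < w" "w \<le> t" using that by (auto simp: undot_eq_Some)
    have "r < i"
    proof (rule ccontr)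
      assume "\<not> r < i"
      then have "i < r \<or> i = r" by auto
      then show False using sInc_col[OF S w(1) Dot] w Dot by auto
    qed
    have "(i, j) \<in> dom D"
      using skew_convex[OF sInc_skew[OF S], of r j i "Suc j" i j] k w(1) \<open>r < i\<close> by auto
    then obtain x where x: "D (i, j) = Some x" by auto
    have "x \<noteq> Dot"
    proof
      assume "x = Dot"
      then have "adj (r, j) (i, j)" using sInc_col_Num_Dot_adj[OF S k _ \<open>r < i\<close>] x by simp
      then have "i = Suc r" using \<open>r < i\<close> by (simp add: adj_def)
      then show False using below x \<open>x = Dot\<close> by simp
    qed
    then obtain v where v: "x = Num v" by (cases x) auto
    have "k < v" using sInc_col[OF S k x \<open>r < i\<close>] v by simp
    moreover have "v < w" using sInc_row[OF S x w(1)] v by simp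
    ultimately show ?thesis using x v w by (auto simp: undot_eq_Some)
  qed
qed

lemma kmove_lose:
  assumes S: "sInc k D" and "k \<in> col (undot D) j" "k \<notin> col (undot (kmove k D)) j"
  shows "k \<in> col (undot (kmove k D)) (Suc j) \<and>
    (\<forall>t. card (col (undot D) (Suc j) \<inter> {k<..t}) \<le> card (col (undot D) j \<inter> {k<..<t}))"
proof -
  obtain r where k: "D (r, j) = Some (Num k)" using assms(2) by (auto simp: col_def undot_eq_Some)
  then have cell: "D (r, Suc j) = Some Dot" "D (Suc r, j) \<noteq> Some Dot"
    using kmove_lose_cell[OF S _ assms(3)] by auto
  have "kmove k D (r, Suc j) = Some (Num k)"
    using k cell(1) kmove_eq_Num_self[of k D "(r, Suc j)"] by (auto simp: adj_def)
  then show ?thesis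
    using kmove_lose_count[OF S k cell] by (auto simp: col_def undot_eq_Some)
qed

text \<open>The column bound makes an entry \<open>k\<close> that leaves a column land in a column that still
  belongs to the chain.\<close>
lemma nested_tri_kmove:
  assumes S: "sInc k D" and "1 \<le> C" and bound: "\<forall>(i, j)\<in>dom (undot (kmove k D)). j \<le> C"
  shows "nested_tri (col (undot D)) 1 C = nested_tri (col (undot (kmove k D))) 1 C"
proof (rule nested_tri_eq_if_entry_shifts_right[OF _ _ col_undot_kmove_other \<open>1 \<le> C\<close>])
  have "finite (dom (undot (kmove k D)))"
    using finite_dom_undot_sInc[OF S] dom_undot_subset dom_kmove sInc_skew[OF S] skew_finite
    by (metis finite_subset)
  then show "finite (col (undot D) l)" "finite (col (undot (kmove k D)) l)" for l
    using finite_col finite_dom_undot_sInc[OF S] by auto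
  show "1 < l \<and> k \<in> col (undot D) (l - 1) \<and>
      (\<forall>t. card (col (undot D) (l - 1) \<inter> {t..<k}) \<le> card (col (undot D) l \<inter> {t<..<k}))"
    if "k \<in> col (undot (kmove k D)) l" "k \<notin> col (undot D) l" for l
    using kmove_gain[OF S that] .
  show "l < C \<and> k \<in> col (undot (kmove k D)) (Suc l) \<and>
      (\<forall>t. card (col (undot D) (Suc l) \<inter> {k<..t}) \<le> card (col (undot D) l \<inter> {k<..<t}))"
    if "k \<in> col (undot D) l" "k \<notin> col (undot (kmove k D)) l" for l
  proof -
    have "k \<in> col (undot (kmove k D)) (Suc l)" using kmove_lose[OF S that] by blast
    then have "Suc l \<le> C" using bound by (auto simp: col_def)
    then show ?thesis using kmove_lose[OF S that] by simp
  qed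
qed

lemma kmove_cases:
  assumes "kmove k D c = Some a'" "D c = Some a"
  shows "a' = a \<or> (a = Num k \<and> a' = Dot) \<or> (a = Dot \<and> a' = Num k)"
  using assms unfolding kmove_def by (auto split: dentry.splits if_splits)

lemma kmove_swap_adj:
  assumes "D c = Some (Num k)" "D c' = Some Dot" "adj c c'"
  shows "kmove k D c = Some Dot" "kmove k D c' = Some (Num k)"
  using assms adj_sym[OF assms(3)] unfolding kmove_def by (cases c; cases c'; fastforce)+

lemma dlt_kmove:
  assumes "1 \<le> k" "dlt k a b" and adj: "a = Num k \<Longrightarrow> b = Dot \<Longrightarrow> adj c1 c2"
    and "D c1 = Some a" "D c2 = Some b" "kmove k D c1 = Some a'" "kmove k D c2 = Some b'"
  shows "dlt (k - 1) a' b'"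
proof (cases "a = Num k \<and> b = Dot")
  case True
  then show ?thesis using kmove_swap_adj[of D c1 k c2] adj assms(1,4-7) by auto
next
  case False
  then show ?thesis
    using kmove_cases[OF assms(6,4)] kmove_cases[OF assms(7,5)] assms(1,2)
    by (cases a; cases b) auto
qed

lemma sInc_kmove:
  assumes S: "sInc k D" and "1 \<le> k"
  shows "sInc (k - 1) (kmove k D)"
  unfolding sInc_def
proof (intro conjI allI impI)
  show "skew (dom (kmove k D))" using sInc_skew[OF S] by (simp add: dom_kmove)
  show "1 \<le> v" if "kmove k D c = Some (Num v)" for c v
    using that assms kmove_eq_Num_other[of v k D c] unfolding sInc_def by (cases c; cases "v = k") auto
  show "dlt (k - 1) a' b'"
    if a': "kmove k D (i, j) = Some a'" and b': "kmove k D (i, j') = Some b'" and "j < j'" for i j j' a' b'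
  proof -
    obtain a b where "D (i, j) = Some a" "D (i, j') = Some b"
      using a' b' dom_kmove by (metis domD domI)
    then show ?thesis
      using dlt_kmove[OF assms(2) sInc_row[OF S] _ _ _ a' b'] sInc_row_Num_Dot_adj[OF S] \<open>j < j'\<close> by blast
  qed
  show "dlt (k - 1) a' b'"
    if a': "kmove k D (i, j) = Some a'" and b': "kmove k D (i', j) = Some b'" and "i < i'" for i i' j a' b'
  proof -
    obtain a b where "D (i, j) = Some a" "D (i', j) = Some b"
      using a' b' dom_kmove by (metis domD domI)
    then show ?thesis
      using dlt_kmove[OF assms(2) sInc_col[OF S] _ _ _ a' b'] sInc_col_Num_Dot_adj[OF S] \<open>i < i'\<close> by blast
  qed
qed

section \<open>Invariance under anti-rectification\<close>

lemma kmove_cols_le_back: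
  assumes S: "sInc k D" and bound: "\<forall>(i, j)\<in>dom (undot (kmove k D)). j \<le> C"
  shows "\<forall>(i, j)\<in>dom (undot D). j \<le> C"
proof (clarify)
  fix r j v
  assume "undot D (r, j) = Some v"
  then have D: "D (r, j) = Some (Num v)" by (simp add: undot_eq_Some)
  show "j \<le> C"
  proof (cases "kmove k D (r, j) = Some (Num v)")
    case True
    then have "(r, j) \<in> dom (undot (kmove k D))" by (simp add: domI undot_eq_Some)
    then show ?thesis using bound by auto
  next
    case False
    then have "v = k" using D kmove_eq_Num_other by metis
    then obtain c' where c': "adj (r, j) c'" "D c' = Some Dot"
      using False D kmove_eq_Num_self[of k D "(r, j)"] by auto
    have "kmove k D c' = Some (Num k)" using kmove_swap_adj(2)[of D "(r, j)" k c'] c' D \<open>v = k\<close> by simp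
    then have "c' \<in> dom (undot (kmove k D))" by (simp add: domI undot_eq_Some)
    then have "snd c' \<le> C" using bound by (cases c') auto
    moreover from c'(1) have "j \<le> snd c'"
      by (cases rule: adj_cases) (use sInc_row[OF S _ D, of "j - 1" Dot] c'(2) \<open>v = k\<close> in auto)
    ultimately show ?thesis by simp
  qed
qed

lemma sInc_rev_moves: "sInc k D \<Longrightarrow> sInc 0 (rev_moves k D)"
proof (induction k arbitrary: D)
  case (Suc k)
  then show ?case using sInc_kmove[OF Suc.prems] by simp
qed simp

lemma rev_moves_cols_le_back:
  "sInc k D \<Longrightarrow> \<forall>(i, j)\<in>dom (undot (rev_moves k D)). j \<le> C \<Longrightarrow> \<forall>(i, j)\<in>dom (undot D). j \<le> C"
proof (induction k arbitrary: D)
  case (Suc k)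
  have S: "sInc k (kmove (Suc k) D)" using sInc_kmove[OF Suc.prems(1)] by simp
  have "\<forall>(i, j)\<in>dom (undot (kmove (Suc k) D)). j \<le> C" using Suc.IH[OF S] Suc.prems(2) by simp
  then show ?case using kmove_cols_le_back[OF Suc.prems(1)] by blast
qed simp

lemma nested_tri_rev_moves:
  assumes "sInc k D" "1 \<le> C" "\<forall>(i, j)\<in>dom (undot (rev_moves k D)). j \<le> C"
  shows "nested_tri (col (undot D)) 1 C = nested_tri (col (undot (rev_moves k D))) 1 C"
  using assms
proof (induction k arbitrary: D)
  case (Suc k)
  have S: "sInc k (kmove (Suc k) D)" using sInc_kmove[OF Suc.prems(1)] by simp
  have "\<forall>(i, j)\<in>dom (undot (kmove (Suc k) D)). j \<le> C"
    using rev_moves_cols_le_back[OF S] Suc.prems(3) by simp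
  then show ?case using nested_tri_kmove[OF Suc.prems(1,2)] Suc.IH[OF S Suc.prems(2)] Suc.prems(3) by simp
qed simp

lemma antirect_stepE:
  assumes "antirect_step T T'"
  obtains m D where "sInc m D" "undot D = T" "T' = undot (rev_moves m D)"
  using assms undot_add_dots unfolding antirect_step_def by metis

lemma antirect_cols_le_back:
  "antirect T Q \<Longrightarrow> \<forall>(i, j)\<in>dom Q. j \<le> C \<Longrightarrow> \<forall>(i, j)\<in>dom T. j \<le> C"
proof (induction rule: antirect.induct)
  case (next_step T T'' T')
  then show ?case by (metis antirect_stepE rev_moves_cols_le_back)
qed

lemma nested_tri_antirect:
  "antirect T Q \<Longrightarrow> 1 \<le> C \<Longrightarrow> \<forall>(i, j)\<in>dom Q. j \<le> C \<Longrightarrow>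
    nested_tri (col T) 1 C = nested_tri (col Q) 1 C"
proof (induction rule: antirect.induct)
  case (next_step T T'' T')
  have "\<forall>(i, j)\<in>dom T''. j \<le> C" using antirect_cols_le_back next_step by blast
  then have "nested_tri (col T) 1 C = nested_tri (col T'') 1 C"
    using next_step.hyps(2) \<open>1 \<le> C\<close> by (metis antirect_stepE nested_tri_rev_moves)
  then show ?case using next_step by simp
qed simp

lemma antirect_antinormal: "antirect T Q \<Longrightarrow> antinormal (dom Q)"
  by (induction rule: antirect.induct) auto

section \<open>Anti-normal tableaux\<close>

definition strictly_increasing :: "(cell \<Rightarrow> nat option) \<Rightarrow> bool" where
  "strictly_increasing T \<longleftrightarrow>
     (\<forall>i j j' a b. T (i, j) = Some a \<longrightarrow> T (i, j') = Some b \<longrightarrow> j < j' \<longrightarrow> a < b) \<and>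
     (\<forall>i i' j a b. T (i, j) = Some a \<longrightarrow> T (i', j) = Some b \<longrightarrow> i < i' \<longrightarrow> a < b)"

lemma inc_tab_strictly_increasing: "inc_tab T \<Longrightarrow> strictly_increasing T"
  unfolding inc_tab_def strictly_increasing_def by blast

lemma sInc_0_strictly_increasing: "sInc 0 D \<Longrightarrow> strictly_increasing (undot D)"
  unfolding strictly_increasing_def undot_eq_Some using sInc_row sInc_col by fastforce

lemma antirect_strictly_increasing:
  "antirect T Q \<Longrightarrow> strictly_increasing T \<Longrightarrow> strictly_increasing Q"
proof (induction rule: antirect.induct)
  case (next_step T T'' T')
  then show ?case by (metis antirect_stepE sInc_0_strictly_increasing sInc_rev_moves)
qed

lemma antinormal_finite: "antinormal S \<Longrightarrow> finite S"
  unfolding antinormal_def rect_def by auto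

lemma antinormal_row_closed:
  assumes "antinormal S" "(i0, C) \<in> S" "(r, l) \<in> S" "l < C"
  shows "(r, Suc l) \<in> S"
proof -
  obtain a b M where M: "young M" "S = rect a b - M" using assms(1) unfolding antinormal_def by blast
  have r: "1 \<le> r" "r \<le> a" "1 \<le> l" "(r, l) \<notin> M" and "C \<le> b"
    using assms(2,3) M(2) unfolding rect_def by auto
  moreover have "(r, Suc l) \<notin> M"
    using M(1) r unfolding young_def by (meson le_SucI order_refl)
  ultimately show ?thesis using assms(4) M(2) unfolding rect_def by auto
qed

lemma antinormal_col_matchable:
  assumes "antinormal (dom Q)" "strictly_increasing Q" "(i0, C) \<in> dom Q" "l < C"
  shows "matchable (col Q l) (col Q (Suc l))"
  unfolding matchable_def
proof
  fix t
  show "card (col Q l \<inter> {t..}) \<le> card (col Q (Suc l) \<inter> {t<..})"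
  proof (rule card_col_Int_le[OF antinormal_finite[OF assms(1)]])
    show "i = i'" if "Q (i, Suc l) = Some w" "Q (i', Suc l) = Some w" for i i' w
      using that assms(2) unfolding strictly_increasing_def by (metis less_irrefl linorder_neqE_nat)
    show "\<exists>w. Q (i, Suc l) = Some w \<and> w \<in> {t<..}" if v: "Q (i, l) = Some v" and vt: "v \<in> {t..}" for i v
    proof -
      obtain w where w: "Q (i, Suc l) = Some w"
        using antinormal_row_closed[OF assms(1,3) _ assms(4), of i] v by blast
      then have "v < w" using v assms(2) unfolding strictly_increasing_def by blast
      then show ?thesis using w vt by auto
    qed
  qed
qed

lemma nested_tri_antinormal:
  assumes "antinormal (dom Q)" "strictly_increasing Q" "\<exists>i. (i, C) \<in> dom Q" "1 \<le> C"
  shows "nested_tri (col Q) 1 C = col Q 1"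
proof -
  obtain i0 where "(i0, C) \<in> dom Q" using assms(3) by blast
  then show ?thesis
    using nested_tri_eq_if_matching[of "col Q" 1 C] antinormal_col_matchable[OF assms(1,2)]
      finite_col[OF antinormal_finite[OF assms(1)]] assms(4)
    by blast
qed

theorem theorem5p9:
  fixes P Q :: "cell \<Rightarrow> nat option" and C :: nat
  assumes "inc_tab P" and "young (dom P)"
    and "\<forall>(i,j)\<in>dom P. j \<le> C" and "(1, C) \<in> dom P"
    and "antirect P Q"
    and "\<forall>(i,j)\<in>dom Q. j \<le> C" and "\<exists>i. (i, C) \<in> dom Q"
  shows "col Q 1 = Pij P 1 C"
proof -
  have C: "1 \<le> C" using assms(2,4) unfolding young_def by blast
  have Q: "strictly_increasing Q"
    using antirect_strictly_increasing[OF assms(5) inc_tab_strictly_increasing[OF assms(1)]] .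
  have "col Q 1 = nested_tri (col Q) 1 C"
    using nested_tri_antinormal[OF antirect_antinormal[OF assms(5)] Q assms(7) C] by simp
  also have "\<dots> = nested_tri (col P) 1 C" using nested_tri_antirect[OF assms(5) C assms(6)] by simp
  also have "\<dots> = Pij P 1 C" by (simp add: Pij_eq_nested_tri)
  finally show ?thesis .
qed

end
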